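(* Under the standing setup and assumptions (A1)–(A3) described in the context, there exist operators $S^b\in\mathcal A_b$ and $S^t\in\mathcal A_t$ such that $$U|\Omega,\Omega\rangle=S^bS^t|\Omega,\Omega\rangle .$$ Moreover, writing $U|\Omega,\Omega\rangle=\sum_{i\in I,j\in J}X_{ij}|i,j\rangle$, the coefficients factor as $X_{ij}=\alpha_i\beta_j$ for some complex numbers $\alpha_i$ ($i\in I$), $\beta_j$ ($j\in J$).
   Context: Standing setup. $\mathcal H$ is a finite-dimensional complex Hilbert space; $I$ and $J$ are finite index sets and $\{|i,j\rangle: i\in I,j\in J\}$ is an orthonormal family in $\mathcal H$ (physically: low-energy edge states of a gapped 2D system on a cylinder, $i$ labelling the bottom edge and $j$ the top edge, in a fixed topological sector). $V$ denotes their span. Real numbers $\varepsilon^b_i$ ($i\in I$) and $\varepsilon^t_j$ ($j\in J$) are given (physically $\varepsilon^b_i=E^b_i-\mu_bN^b_i$, $\varepsilon^t_j=E^t_j-\mu_tN^t_j$). There is a distinguished index, denoted $\Omega$, in $I$ and in $J$ with $\varepsilon^b_\Omega=\varepsilon^t_\Omega=0\le \varepsilon^b_i,\varepsilon^t_j$ for all $i,j$. For $\delta>0$ put $I_\delta=\{i\in I:\varepsilon^b_i\le\delta\}$, $J_\delta=\{j\in J:\varepsilon^t_j\le\delta\}$, $V_\delta=\mathrm{span}\{|i,j\rangle:i\in I_\delta,j\in J_\delta\}$. $\mathcal A_b$ and $\mathcal A_t$ are sets of linear operators on $\mathcal H$ ("operators supported near the bottom edge / top edge"), each closed under sums, scalar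 multiples, products and adjoints and containing the identity, such that every element of $\mathcal A_b$ commutes with every element of $\mathcal A_t$. $U$ is a unitary on $\mathcal H$ (the flux-insertion evolution, a finite-time evolution by a local Hamiltonian) such that $U^\dagger\mathcal A_bU\subseteq\mathcal A_b$, $U\mathcal A_bU^\dagger\subseteq\mathcal A_b$, $U^\dagger\mathcal A_tU\subseteq\mathcal A_t$, $U\mathcal A_tU^\dagger\subseteq\mathcal A_t$ (idealized Lieb–Robinson locality). Assumptions. (A1) For all $i,i'\in I$ there is $O^b_{i'i}\in\mathcal A_b$ with $O^b_{i'i}|k,j\rangle=\delta_{ki}|i',j\rangle$ for all $k\in I,j\in J$; for all $j,j'\in J$ there is $O^t_{j'j}\in\mathcal A_t$ with $O^t_{j'j}|i,l\rangle=\delta_{lj}|i,j'\rangle$ for all $i\in I,l\in J$. (A2) For all $i\in I$, $j\in J$, $O^b\in\mathcal A_b$, $O^t\in\mathcal A_t$: $\langle i,j|O^bO^t|i,j\rangle=\langle i,j|O^b|i,j\rangle\langle i,j|O^t|i,j\rangle$. (A3) There is $\delta>0$ with $U V_\delta\subseteq V$. *)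

theory Defs
  imports "Jordan_Normal_Form.Matrix" "Jordan_Normal_Form.Schur_Decomposition"
begin

text \<open>The finite-dimensional Hilbert space H is modelled as complex n-vectors
(carrier_vec n), operators as complex n x n matrices, the adjoint is mat_adjoint.\<close>

text \<open>Physics inner product: antilinear in the first argument, linear in the second.\<close>
definition braket :: "complex vec \<Rightarrow> complex vec \<Rightarrow> complex" where
  "braket v w = w \<bullet>c v"

definition kcomb :: "nat \<Rightarrow> ('i \<Rightarrow> 'j \<Rightarrow> complex vec) \<Rightarrow> ('i \<times> 'j) set
    \<Rightarrow> ('i \<times> 'j \<Rightarrow> complex) \<Rightarrow> complex vec" where
  "kcomb n ket S c = vec n (\<lambda>k. \<Sum>p\<in>S. c p * (ket (fst p) (snd p) $ k))"

definition kspan :: "nat \<Rightarrow> ('i \<Rightarrow> 'j \<Rightarrow> complex vec) \<Rightarrow> ('i \<times> 'j) set \<Rightarrow> complex vec set" where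
  "kspan n ket S = {kcomb n ket S c | c. True}"

end

theory Submission imports Defs begin

(* Expand U|\<Omega>,\<Omega>> = \<Sum> X(i,j) |i,j>, which (A3) allows. If some X(i0,j0) is nonzero,
the product of the (A1) operators sending i to i0 at the bottom and j to j0 at the top maps
|i,j> to |i0,j0> and kills every other basis ket, so its expectation in U|\<Omega>,\<Omega>> is
cnj X(i0,j0) * X(i,j). Conjugation by U preserves both algebras, so this is also the
expectation of a bottom operator times a top operator in |\<Omega>,\<Omega>>, which factorizes by (A2);
hence X(i,j) = \<alpha> i * \<beta> j. Finally S_b = \<Sum> \<alpha> i O_b(\<Omega> \<rightarrow> i) and S_t = \<Sum> \<beta> j O_t(\<Omega> \<rightarrow> j)
lie in the algebras and create this product state from |\<Omega>,\<Omega>>. *)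

definition comb_vec :: "nat \<Rightarrow> 'a set \<Rightarrow> ('a \<Rightarrow> complex) \<Rightarrow> ('a \<Rightarrow> complex vec) \<Rightarrow> complex vec" where
  "comb_vec n S c v = vec n (\<lambda>k. \<Sum>p\<in>S. c p * v p $ k)"

lemma kcomb_eq_comb_vec: "kcomb n ket S c = comb_vec n S c (\<lambda>p. ket (fst p) (snd p))"
  unfolding kcomb_def comb_vec_def ..

lemma comb_vec_cong:
  "(\<And>p. p \<in> S \<Longrightarrow> c p = c' p) \<Longrightarrow> (\<And>p. p \<in> S \<Longrightarrow> v p = v' p)
    \<Longrightarrow> comb_vec n S c v = comb_vec n S c' v'"
  unfolding comb_vec_def by (intro eq_vecI) auto

lemma comb_vec_delta_vec:
  assumes "finite S" "q \<in> S" "w \<in> carrier_vec n"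
  shows "comb_vec n S c (\<lambda>p. if p = q then w else 0\<^sub>v n) = c q \<cdot>\<^sub>v w"
proof (rule eq_vecI)
  fix k assume k: "k < dim_vec (c q \<cdot>\<^sub>v w)"
  have "(\<Sum>p\<in>S. c p * (if p = q then w else 0\<^sub>v n) $ k) = (\<Sum>p\<in>S. if p = q then c q * w $ k else 0)"
    using k assms by (intro sum.cong) auto
  then show "comb_vec n S c (\<lambda>p. if p = q then w else 0\<^sub>v n) $ k = (c q \<cdot>\<^sub>v w) $ k"
    using k assms by (simp add: comb_vec_def)
qed (use assms in \<open>simp add: comb_vec_def\<close>)

lemma comb_vec_delta_coeff:
  assumes "finite S" "q \<in> S" "v q \<in> carrier_vec n"
  shows "comb_vec n S (\<lambda>p. if p = q then 1 else 0) v = v q"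
proof -
  have "comb_vec n S (\<lambda>p. if p = q then 1 else 0) v = comb_vec n S (\<lambda>_. 1) (\<lambda>p. if p = q then v q else 0\<^sub>v n)"
    using assms by (intro eq_vecI) (auto simp: comb_vec_def intro!: sum.cong)
  then show ?thesis
    using assms comb_vec_delta_vec[of S q "v q" n "\<lambda>_. 1"] by simp
qed

lemma mult_mat_vec_comb_vec:
  fixes M :: "complex mat"
  assumes M: "M \<in> carrier_mat n n" and v: "\<And>p. p \<in> S \<Longrightarrow> v p \<in> carrier_vec n"
  shows "M *\<^sub>v comb_vec n S c v = comb_vec n S c (\<lambda>p. M *\<^sub>v v p)"
proof (rule eq_vecI)
  fix k assume "k < dim_vec (comb_vec n S c (\<lambda>p. M *\<^sub>v v p))"
  then have k: "k < n" by (simp add: comb_vec_def)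
  have "(M *\<^sub>v comb_vec n S c v) $ k = (\<Sum>l<n. M $$ (k,l) * (\<Sum>p\<in>S. c p * v p $ l))"
    using M k by (simp add: comb_vec_def scalar_prod_def lessThan_atLeast0)
  also have "\<dots> = (\<Sum>p\<in>S. c p * (\<Sum>l<n. M $$ (k,l) * v p $ l))"
    by (simp add: sum_distrib_left mult.left_commute sum.swap[of _ "{..<n}"])
  also have "\<dots> = (\<Sum>p\<in>S. c p * (M *\<^sub>v v p) $ k)"
  proof (intro sum.cong refl)
    fix p assume "p \<in> S"
    then have "dim_vec (v p) = n" using v by auto
    then show "c p * (\<Sum>l<n. M $$ (k,l) * v p $ l) = c p * (M *\<^sub>v v p) $ k"
      using M k by (simp add: scalar_prod_def lessThan_atLeast0)
  qed
  finally show "(M *\<^sub>v comb_vec n S c v) $ k = comb_vec n S c (\<lambda>p. M *\<^sub>v v p) $ k"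
    using k by (simp add: comb_vec_def)
qed (use M in \<open>simp add: comb_vec_def\<close>)

lemma comb_vec_comb_vec:
  assumes "finite I" "finite J"
  shows "comb_vec n J \<beta> (\<lambda>j. comb_vec n I \<alpha> (\<lambda>i. v i j))
       = comb_vec n (I \<times> J) (\<lambda>p. \<alpha> (fst p) * \<beta> (snd p)) (\<lambda>p. v (fst p) (snd p))"
  using assms
  by (intro eq_vecI)
     (simp_all add: comb_vec_def sum_distrib_left sum.cartesian_product' sum.swap[of _ J] mult_ac)

lemma braket_eq_sum:
  "v \<in> carrier_vec n \<Longrightarrow> w \<in> carrier_vec n \<Longrightarrow> braket v w = (\<Sum>k<n. w $ k * cnj (v $ k))"
  unfolding braket_def scalar_prod_def by (simp add: lessThan_atLeast0)

lemma braket_smult_right: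
  "v \<in> carrier_vec n \<Longrightarrow> w \<in> carrier_vec n \<Longrightarrow> braket v (a \<cdot>\<^sub>v w) = a * braket v w"
  unfolding braket_def by simp

lemma braket_comb_vec_left:
  assumes w: "w \<in> carrier_vec n" and v: "\<And>p. p \<in> S \<Longrightarrow> v p \<in> carrier_vec n"
  shows "braket (comb_vec n S c v) w = (\<Sum>p\<in>S. cnj (c p) * braket (v p) w)"
proof -
  have "braket (comb_vec n S c v) w = (\<Sum>k<n. w $ k * cnj (\<Sum>p\<in>S. c p * v p $ k))"
    using w by (simp add: braket_eq_sum[where n = n] comb_vec_def)
  also have "\<dots> = (\<Sum>p\<in>S. cnj (c p) * (\<Sum>k<n. w $ k * cnj (v p $ k)))"
    by (simp add: cnj_sum sum_distrib_left mult_ac sum.swap[of _ "{..<n}"])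
  also have "\<dots> = (\<Sum>p\<in>S. cnj (c p) * braket (v p) w)"
    using w v by (simp add: braket_eq_sum[where n = n])
  finally show ?thesis .
qed

lemma carrier_mat_adjoint: "A \<in> carrier_mat nr nc \<Longrightarrow> mat_adjoint A \<in> carrier_mat nc nr"
  unfolding mat_adjoint_def by auto

lemma mat_adjoint_index:
  "A \<in> carrier_mat n n \<Longrightarrow> i < n \<Longrightarrow> j < n \<Longrightarrow> mat_adjoint A $$ (i, j) = cnj (A $$ (j, i))"
  unfolding mat_adjoint_def by (auto simp: mat_of_rows_index)

lemma smult_mat_mult_mat_vec:
  "A \<in> carrier_mat nr nc \<Longrightarrow> x \<in> carrier_vec nc
    \<Longrightarrow> (c \<cdot>\<^sub>m A) *\<^sub>v x = c \<cdot>\<^sub>v (A *\<^sub>v (x :: 'a :: comm_semiring_0 vec))"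
  by (intro eq_vecI) (auto simp: scalar_prod_def sum_distrib_left mult.assoc)

lemma braket_mult_mat_vec_left:
  assumes U: "U \<in> carrier_mat n n" and x: "x \<in> carrier_vec n" and y: "y \<in> carrier_vec n"
  shows "braket (U *\<^sub>v x) y = braket x (mat_adjoint U *\<^sub>v y)"
proof -
  have "braket (U *\<^sub>v x) y = (\<Sum>k<n. y $ k * cnj (\<Sum>l<n. U $$ (k, l) * x $ l))"
    using U x y by (simp add: braket_eq_sum[where n = n] scalar_prod_def lessThan_atLeast0)
  also have "\<dots> = (\<Sum>k<n. \<Sum>l<n. y $ k * (cnj (U $$ (k, l)) * cnj (x $ l)))"
    by (simp add: cnj_sum sum_distrib_left)
  also have "\<dots> = (\<Sum>l<n. \<Sum>k<n. y $ k * (cnj (U $$ (k, l)) * cnj (x $ l)))"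
    by (rule sum.swap)
  also have "\<dots> = (\<Sum>l<n. (\<Sum>k<n. cnj (U $$ (k, l)) * y $ k) * cnj (x $ l))"
    unfolding sum_distrib_right by (intro sum.cong refl) (simp add: mult_ac)
  also have "\<dots> = braket x (mat_adjoint U *\<^sub>v y)"
    using U x y carrier_mat_adjoint[OF U]
    by (simp add: braket_eq_sum[where n = n] scalar_prod_def lessThan_atLeast0 mat_adjoint_index)
  finally show ?thesis .
qed

lemma unitary_conj_mult:
  assumes U: "U \<in> carrier_mat n n" and unitary: "U * mat_adjoint U = 1\<^sub>m n"
    and A: "A \<in> carrier_mat n n" and B: "B \<in> carrier_mat n n"
  shows "(mat_adjoint U * A * U) * (mat_adjoint U * B * U) = mat_adjoint U * (A * B) * U"
proof -
  have Uh: "mat_adjoint U \<in> carrier_mat n n"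
    using carrier_mat_adjoint[OF U] .
  have "(mat_adjoint U * A * U) * (mat_adjoint U * B * U)
      = mat_adjoint U * (A * ((U * mat_adjoint U) * (B * U)))"
    using U Uh A B by (simp add: assoc_mult_mat[of _ n n _ n _ n])
  also have "\<dots> = mat_adjoint U * (A * B) * U"
    using U Uh A B by (simp add: unitary assoc_mult_mat[of _ n n _ n _ n])
  finally show ?thesis .
qed

lemma braket_unitary_conj:
  assumes U: "U \<in> carrier_mat n n" and M: "M \<in> carrier_mat n n" and x: "x \<in> carrier_vec n"
  shows "braket (U *\<^sub>v x) (M *\<^sub>v (U *\<^sub>v x)) = braket x ((mat_adjoint U * M * U) *\<^sub>v x)"
  using U M x carrier_mat_adjoint[OF U]
  by (simp add: braket_mult_mat_vec_left[OF U] assoc_mult_mat_vec[of _ n n _ n])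

lemma braket_unitary_conj_mult:
  assumes U: "U \<in> carrier_mat n n" and unitary: "U * mat_adjoint U = 1\<^sub>m n"
    and A: "A \<in> carrier_mat n n" and B: "B \<in> carrier_mat n n" and x: "x \<in> carrier_vec n"
  shows "braket (U *\<^sub>v x) ((A * B) *\<^sub>v (U *\<^sub>v x))
       = braket x (((mat_adjoint U * A * U) * (mat_adjoint U * B * U)) *\<^sub>v x)"
  using braket_unitary_conj[OF U mult_carrier_mat[OF A B] x] unitary_conj_mult[OF U unitary A B]
  by simp

lemma exists_operator_comb_vec:
  fixes A :: "complex mat set"
  assumes A: "A \<subseteq> carrier_mat n n" and add: "\<forall>P\<in>A. \<forall>Q\<in>A. P + Q \<in> A"
    and smult: "\<forall>c. \<forall>P\<in>A. c \<cdot>\<^sub>m P \<in> A" and one: "1\<^sub>m n \<in> A"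
    and "finite F" and Op: "Op ` F \<subseteq> A"
  shows "\<exists>S\<in>A. \<forall>x\<in>carrier_vec n. S *\<^sub>v x = comb_vec n F c (\<lambda>a. Op a *\<^sub>v x)"
  using \<open>finite F\<close> Op
proof (induction F rule: finite_induct)
  case empty
  have "0 \<cdot>\<^sub>m 1\<^sub>m n \<in> A"
    using smult one by blast
  moreover have "(0 \<cdot>\<^sub>m 1\<^sub>m n) *\<^sub>v x = comb_vec n {} c (\<lambda>a. Op a *\<^sub>v x)" if "x \<in> carrier_vec n" for x
    using that by (intro eq_vecI) (auto simp: comb_vec_def scalar_prod_def)
  ultimately show ?case by blast
next
  case (insert a F)
  then obtain S where S: "S \<in> A" "\<forall>x\<in>carrier_vec n. S *\<^sub>v x = comb_vec n F c (\<lambda>a. Op a *\<^sub>v x)"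
    by auto
  have carrier: "S \<in> carrier_mat n n" "Op a \<in> carrier_mat n n"
    using S insert.prems A by auto
  have "S + c a \<cdot>\<^sub>m Op a \<in> A"
    using add smult S insert.prems by blast
  moreover have "(S + c a \<cdot>\<^sub>m Op a) *\<^sub>v x = comb_vec n (insert a F) c (\<lambda>a. Op a *\<^sub>v x)"
    if x: "x \<in> carrier_vec n" for x
  proof -
    have "(S + c a \<cdot>\<^sub>m Op a) *\<^sub>v x = S *\<^sub>v x + c a \<cdot>\<^sub>v (Op a *\<^sub>v x)"
      using carrier x by (simp add: add_mult_distrib_mat_vec smult_mat_mult_mat_vec)
    then show ?thesis
      using S(2) carrier x insert.hyps by (intro eq_vecI) (auto simp: comb_vec_def)
  qed
  ultimately show ?case by blast
qed

lemma exists_operator_superposition_from: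
  fixes A :: "complex mat set"
  assumes A: "A \<subseteq> carrier_mat n n" and add: "\<forall>P\<in>A. \<forall>Q\<in>A. P + Q \<in> A"
    and smult: "\<forall>c. \<forall>P\<in>A. c \<cdot>\<^sub>m P \<in> A" and one: "1\<^sub>m n \<in> A"
    and "finite I" "\<Omega> \<in> I" and ket: "\<forall>i\<in>I. \<forall>j\<in>J. ket i j \<in> carrier_vec n"
    and shift: "\<forall>i\<in>I. \<exists>Op\<in>A. \<forall>k\<in>I. \<forall>j\<in>J. Op *\<^sub>v ket k j = (if k = \<Omega> then ket i j else 0\<^sub>v n)"
  shows "\<exists>S\<in>A. \<forall>j\<in>J. S *\<^sub>v ket \<Omega> j = comb_vec n I \<alpha> (\<lambda>i. ket i j)"
proof -
  obtain Op where Op: "\<forall>i\<in>I. Op i \<in> A \<and> (\<forall>k\<in>I. \<forall>j\<in>J. Op i *\<^sub>v ket k j = (if k = \<Omega> then ket i j else 0\<^sub>v n))"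
    using shift by metis
  obtain S where "S \<in> A" and S: "\<forall>x\<in>carrier_vec n. S *\<^sub>v x = comb_vec n I \<alpha> (\<lambda>i. Op i *\<^sub>v x)"
    using exists_operator_comb_vec[OF A add smult one \<open>finite I\<close>, of Op \<alpha>] Op by blast
  have "S *\<^sub>v ket \<Omega> j = comb_vec n I \<alpha> (\<lambda>i. ket i j)" if "j \<in> J" for j
    using S ket Op \<open>\<Omega> \<in> I\<close> that by (auto intro: comb_vec_cong)
  then show ?thesis
    using \<open>S \<in> A\<close> by blast
qed

lemma exists_local_operators_product_state:
  fixes Ab At :: "complex mat set"
  assumes Ab_carrier: "Ab \<subseteq> carrier_mat n n" and Ab_add: "\<forall>A\<in>Ab. \<forall>B\<in>Ab. A + B \<in> Ab"
    and Ab_smult: "\<forall>c. \<forall>A\<in>Ab. c \<cdot>\<^sub>m A \<in> Ab" and Ab_one: "1\<^sub>m n \<in> Ab"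
    and At_carrier: "At \<subseteq> carrier_mat n n" and At_add: "\<forall>A\<in>At. \<forall>B\<in>At. A + B \<in> At"
    and At_smult: "\<forall>c. \<forall>A\<in>At. c \<cdot>\<^sub>m A \<in> At" and At_one: "1\<^sub>m n \<in> At"
    and finI: "finite I" and finJ: "finite J" and ket: "\<forall>i\<in>I. \<forall>j\<in>J. ket i j \<in> carrier_vec n"
    and \<Omega>b: "\<Omega>b \<in> I" and \<Omega>t: "\<Omega>t \<in> J"
    and A1b: "\<forall>i\<in>I. \<forall>i'\<in>I. \<exists>Op\<in>Ab. \<forall>k\<in>I. \<forall>j\<in>J.
       Op *\<^sub>v ket k j = (if k = i then ket i' j else 0\<^sub>v n)"
    and A1t: "\<forall>j\<in>J. \<forall>j'\<in>J. \<exists>Op\<in>At. \<forall>i\<in>I. \<forall>l\<in>J.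
       Op *\<^sub>v ket i l = (if l = j then ket i j' else 0\<^sub>v n)"
  shows "\<exists>Sb\<in>Ab. \<exists>St\<in>At.
           Sb *\<^sub>v (St *\<^sub>v ket \<Omega>b \<Omega>t) = kcomb n ket (I \<times> J) (\<lambda>p. \<alpha> (fst p) * \<beta> (snd p))"
proof -
  obtain Sb where "Sb \<in> Ab" and Sb: "\<forall>j\<in>J. Sb *\<^sub>v ket \<Omega>b j = comb_vec n I \<alpha> (\<lambda>i. ket i j)"
    using exists_operator_superposition_from[OF Ab_carrier Ab_add Ab_smult Ab_one finI \<Omega>b, of J ket \<alpha>]
      ket A1b \<Omega>b by blast
  \<comment> \<open>The top edge is the bottom edge of the transposed family \<open>\<lambda>j i. ket i j\<close>.\<close>
  obtain St where "St \<in> At" and St: "\<forall>i\<in>I. St *\<^sub>v ket i \<Omega>t = comb_vec n J \<beta> (\<lambda>j. ket i j)"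
    using exists_operator_superposition_from[OF At_carrier At_add At_smult At_one finJ \<Omega>t,
        of I "\<lambda>j i. ket i j" \<beta>] ket A1t \<Omega>t by blast
  have "Sb *\<^sub>v (St *\<^sub>v ket \<Omega>b \<Omega>t) = Sb *\<^sub>v comb_vec n J \<beta> (\<lambda>j. ket \<Omega>b j)"
    using St \<Omega>b by simp
  also have "\<dots> = comb_vec n J \<beta> (\<lambda>j. Sb *\<^sub>v ket \<Omega>b j)"
    using \<open>Sb \<in> Ab\<close> Ab_carrier ket \<Omega>b by (intro mult_mat_vec_comb_vec) auto
  also have "\<dots> = comb_vec n J \<beta> (\<lambda>j. comb_vec n I \<alpha> (\<lambda>i. ket i j))"
    using Sb by (intro comb_vec_cong) auto
  also have "\<dots> = kcomb n ket (I \<times> J) (\<lambda>p. \<alpha> (fst p) * \<beta> (snd p))"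
    unfolding comb_vec_comb_vec[OF finI finJ] kcomb_eq_comb_vec ..
  finally show ?thesis
    using \<open>Sb \<in> Ab\<close> \<open>St \<in> At\<close> by blast
qed

lemma kcomb_carrier [simp]: "kcomb n ket S c \<in> carrier_vec n"
  unfolding kcomb_def by simp

lemma ket_in_kspan:
  assumes "finite S" "(i, j) \<in> S" "ket i j \<in> carrier_vec n"
  shows "ket i j \<in> kspan n ket S"
proof -
  have "kcomb n ket S (\<lambda>p. if p = (i, j) then 1 else 0) = ket i j"
    using comb_vec_delta_coeff[of S "(i, j)" "\<lambda>p. ket (fst p) (snd p)" n] assms
    by (simp add: kcomb_eq_comb_vec)
  then show ?thesis
    unfolding kspan_def by (metis (mono_tags, lifting) mem_Collect_eq)
qed

lemma braket_kcomb_ket: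
  assumes "finite I" "finite J" and ket: "\<forall>i\<in>I. \<forall>j\<in>J. ket i j \<in> carrier_vec n"
    and orth: "\<forall>i\<in>I. \<forall>j\<in>J. \<forall>i'\<in>I. \<forall>j'\<in>J.
       braket (ket i j) (ket i' j') = (if i = i' \<and> j = j' then 1 else 0)"
    and "i \<in> I" "j \<in> J"
  shows "braket (kcomb n ket (I \<times> J) X) (ket i j) = cnj (X (i, j))"
proof -
  have "braket (kcomb n ket (I \<times> J) X) (ket i j)
      = (\<Sum>p\<in>I \<times> J. cnj (X p) * braket (ket (fst p) (snd p)) (ket i j))"
    unfolding kcomb_eq_comb_vec using assms by (intro braket_comb_vec_left) auto
  also have "\<dots> = (\<Sum>p\<in>I \<times> J. if p = (i, j) then cnj (X (i, j)) else 0)"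
  proof (intro sum.cong refl)
    fix p assume "p \<in> I \<times> J"
    then show "cnj (X p) * braket (ket (fst p) (snd p)) (ket i j) = (if p = (i, j) then cnj (X (i, j)) else 0)"
      using orth[rule_format, of "fst p" "snd p" i j] assms by (cases p) auto
  qed
  also have "\<dots> = cnj (X (i, j))"
    using assms by simp
  finally show ?thesis .
qed

lemma mult_mat_vec_kcomb_transition:
  assumes M: "M \<in> carrier_mat n n" and "finite S" "q \<in> S" "w \<in> carrier_vec n"
    and ket: "\<forall>p\<in>S. ket (fst p) (snd p) \<in> carrier_vec n"
    and M_ket: "\<forall>p\<in>S. M *\<^sub>v ket (fst p) (snd p) = (if p = q then w else 0\<^sub>v n)"
  shows "M *\<^sub>v kcomb n ket S X = X q \<cdot>\<^sub>v w"
proof -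
  have "M *\<^sub>v kcomb n ket S X = comb_vec n S X (\<lambda>p. M *\<^sub>v ket (fst p) (snd p))"
    unfolding kcomb_eq_comb_vec using M ket by (intro mult_mat_vec_comb_vec) auto
  also have "\<dots> = comb_vec n S X (\<lambda>p. if p = q then w else 0\<^sub>v n)"
    using M_ket by (intro comb_vec_cong) auto
  also have "\<dots> = X q \<cdot>\<^sub>v w"
    using assms by (intro comb_vec_delta_vec)
  finally show ?thesis .
qed

lemma braket_kcomb_transition:
  assumes fin: "finite I" "finite J" and ket: "\<forall>i\<in>I. \<forall>j\<in>J. ket i j \<in> carrier_vec n"
    and orth: "\<forall>i\<in>I. \<forall>j\<in>J. \<forall>i'\<in>I. \<forall>j'\<in>J.
       braket (ket i j) (ket i' j') = (if i = i' \<and> j = j' then 1 else 0)"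
    and M: "M \<in> carrier_mat n n" and "q \<in> I \<times> J" and i0: "i0 \<in> I" and j0: "j0 \<in> J"
    and M_ket: "\<forall>p\<in>I \<times> J. M *\<^sub>v ket (fst p) (snd p) = (if p = q then ket i0 j0 else 0\<^sub>v n)"
  shows "braket (kcomb n ket (I \<times> J) X) (M *\<^sub>v kcomb n ket (I \<times> J) X) = X q * cnj (X (i0, j0))"
proof -
  have "M *\<^sub>v kcomb n ket (I \<times> J) X = X q \<cdot>\<^sub>v ket i0 j0"
    using assms by (intro mult_mat_vec_kcomb_transition) auto
  then show ?thesis
    using braket_kcomb_ket[OF fin ket orth i0 j0] ket i0 j0 by (simp add: braket_smult_right[where n = n])
qed

lemma kcomb_coefficients_factorize:
  fixes X :: "'i \<times> 'j \<Rightarrow> complex" and f g :: "complex mat \<Rightarrow> complex"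
  assumes fin: "finite I" "finite J" and ket: "\<forall>i\<in>I. \<forall>j\<in>J. ket i j \<in> carrier_vec n"
    and orth: "\<forall>i\<in>I. \<forall>j\<in>J. \<forall>i'\<in>I. \<forall>j'\<in>J.
       braket (ket i j) (ket i' j') = (if i = i' \<and> j = j' then 1 else 0)"
    and Ab: "Ab \<subseteq> carrier_mat n n" and At: "At \<subseteq> carrier_mat n n"
    and A1b: "\<forall>i\<in>I. \<forall>i'\<in>I. \<exists>Op\<in>Ab. \<forall>k\<in>I. \<forall>j\<in>J.
       Op *\<^sub>v ket k j = (if k = i then ket i' j else 0\<^sub>v n)"
    and A1t: "\<forall>j\<in>J. \<forall>j'\<in>J. \<exists>Op\<in>At. \<forall>i\<in>I. \<forall>l\<in>J.
       Op *\<^sub>v ket i l = (if l = j then ket i j' else 0\<^sub>v n)"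
    and expectation: "\<forall>Ob\<in>Ab. \<forall>Ot\<in>At.
       braket (kcomb n ket (I \<times> J) X) ((Ob * Ot) *\<^sub>v kcomb n ket (I \<times> J) X) = f Ob * g Ot"
  shows "\<exists>\<alpha> \<beta>. \<forall>i\<in>I. \<forall>j\<in>J. X (i, j) = \<alpha> i * \<beta> j"
proof (cases "\<exists>i0\<in>I. \<exists>j0\<in>J. X (i0, j0) \<noteq> 0")
  case False
  then show ?thesis
    by (intro exI[of _ "\<lambda>_. 0"]) auto
next
  case True
  then obtain i0 j0 where i0: "i0 \<in> I" and j0: "j0 \<in> J" and X0: "X (i0, j0) \<noteq> 0"
    by blast
  have "\<forall>i\<in>I. \<exists>Op\<in>Ab. \<forall>k\<in>I. \<forall>j\<in>J. Op *\<^sub>v ket k j = (if k = i then ket i0 j else 0\<^sub>v n)"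
    using A1b i0 by blast
  then obtain Ob where Ob: "\<forall>i\<in>I. Ob i \<in> Ab \<and> (\<forall>k\<in>I. \<forall>j\<in>J. Ob i *\<^sub>v ket k j = (if k = i then ket i0 j else 0\<^sub>v n))"
    by metis
  have "\<forall>j\<in>J. \<exists>Op\<in>At. \<forall>i\<in>I. \<forall>l\<in>J. Op *\<^sub>v ket i l = (if l = j then ket i j0 else 0\<^sub>v n)"
    using A1t j0 by blast
  then obtain Ot where Ot: "\<forall>j\<in>J. Ot j \<in> At \<and> (\<forall>i\<in>I. \<forall>l\<in>J. Ot j *\<^sub>v ket i l = (if l = j then ket i j0 else 0\<^sub>v n))"
    by metis
  have "X (i, j) * cnj (X (i0, j0)) = f (Ob i) * g (Ot j)" if i: "i \<in> I" and j: "j \<in> J" for i j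
  proof -
    have carrier: "Ob i \<in> carrier_mat n n" "Ot j \<in> carrier_mat n n"
      using Ob Ot Ab At i j by auto
    have "(Ob i * Ot j) *\<^sub>v ket (fst p) (snd p) = (if p = (i, j) then ket i0 j0 else 0\<^sub>v n)"
      if p: "p \<in> I \<times> J" for p
    proof -
      have "(Ob i * Ot j) *\<^sub>v ket (fst p) (snd p) = Ob i *\<^sub>v (Ot j *\<^sub>v ket (fst p) (snd p))"
        using carrier ket p by auto
      then show ?thesis
        using p ket Ob Ot i j i0 j0 carrier by (cases p) auto
    qed
    then show ?thesis
      using braket_kcomb_transition[OF fin ket orth mult_carrier_mat[OF carrier] _ i0 j0, of "(i, j)" X]
        expectation Ob Ot i j by auto
  qed
  then have "\<forall>i\<in>I. \<forall>j\<in>J. X (i, j) = f (Ob i) / cnj (X (i0, j0)) * g (Ot j)"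
    using X0 by (simp add: field_simps)
  then show ?thesis
    by (intro exI[of _ "\<lambda>i. f (Ob i) / cnj (X (i0, j0))"] exI[of _ "\<lambda>j. g (Ot j)"])
qed

theorem mainTheorem3:
  fixes n :: nat
    and I :: "'i set" and J :: "'j set"
    and ket :: "'i \<Rightarrow> 'j \<Rightarrow> complex vec"
    and eb :: "'i \<Rightarrow> real" and et :: "'j \<Rightarrow> real"
    and \<Omega>b :: 'i and \<Omega>t :: 'j
    and Ab At :: "complex mat set"
    and U :: "complex mat"
  assumes finI: "finite I" and finJ: "finite J"
    and ket_dim: "\<forall>i\<in>I. \<forall>j\<in>J. ket i j \<in> carrier_vec n"
    and ket_orthonormal: "\<forall>i\<in>I. \<forall>j\<in>J. \<forall>i'\<in>I. \<forall>j'\<in>J.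
           braket (ket i j) (ket i' j') = (if i = i' \<and> j = j' then 1 else 0)"
    and \<Omega>b_in: "\<Omega>b \<in> I" and \<Omega>t_in: "\<Omega>t \<in> J"
    and eb_\<Omega>: "eb \<Omega>b = 0" and et_\<Omega>: "et \<Omega>t = 0"
    and eb_nonneg: "\<forall>i\<in>I. 0 \<le> eb i" and et_nonneg: "\<forall>j\<in>J. 0 \<le> et j"
    and Ab_carrier: "Ab \<subseteq> carrier_mat n n"
    and Ab_add: "\<forall>A\<in>Ab. \<forall>B\<in>Ab. A + B \<in> Ab"
    and Ab_smult: "\<forall>c::complex. \<forall>A\<in>Ab. c \<cdot>\<^sub>m A \<in> Ab"
    and Ab_mult: "\<forall>A\<in>Ab. \<forall>B\<in>Ab. A * B \<in> Ab"
    and Ab_adj: "\<forall>A\<in>Ab. mat_adjoint A \<in> Ab"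
    and Ab_one: "1\<^sub>m n \<in> Ab"
    and At_carrier: "At \<subseteq> carrier_mat n n"
    and At_add: "\<forall>A\<in>At. \<forall>B\<in>At. A + B \<in> At"
    and At_smult: "\<forall>c::complex. \<forall>A\<in>At. c \<cdot>\<^sub>m A \<in> At"
    and At_mult: "\<forall>A\<in>At. \<forall>B\<in>At. A * B \<in> At"
    and At_adj: "\<forall>A\<in>At. mat_adjoint A \<in> At"
    and At_one: "1\<^sub>m n \<in> At"
    and Ab_At_commute: "\<forall>A\<in>Ab. \<forall>B\<in>At. A * B = B * A"
    and U_carrier: "U \<in> carrier_mat n n"
    and U_unitary: "U * mat_adjoint U = 1\<^sub>m n" "mat_adjoint U * U = 1\<^sub>m n"
    and U_Ab: "\<forall>A\<in>Ab. mat_adjoint U * A * U \<in> Ab \<and> U * A * mat_adjoint U \<in> Ab"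
    and U_At: "\<forall>A\<in>At. mat_adjoint U * A * U \<in> At \<and> U * A * mat_adjoint U \<in> At"
    and A1b: "\<forall>i\<in>I. \<forall>i'\<in>I. \<exists>Op\<in>Ab. \<forall>k\<in>I. \<forall>j\<in>J.
           Op *\<^sub>v ket k j = (if k = i then ket i' j else 0\<^sub>v n)"
    and A1t: "\<forall>j\<in>J. \<forall>j'\<in>J. \<exists>Op\<in>At. \<forall>i\<in>I. \<forall>l\<in>J.
           Op *\<^sub>v ket i l = (if l = j then ket i j' else 0\<^sub>v n)"
    and A2: "\<forall>i\<in>I. \<forall>j\<in>J. \<forall>Ob\<in>Ab. \<forall>Ot\<in>At.
           braket (ket i j) ((Ob * Ot) *\<^sub>v ket i j)
             = braket (ket i j) (Ob *\<^sub>v ket i j) * braket (ket i j) (Ot *\<^sub>v ket i j)"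
    and A3: "\<exists>\<delta>>0. \<forall>v\<in>kspan n ket ({i\<in>I. eb i \<le> \<delta>} \<times> {j\<in>J. et j \<le> \<delta>}).
           U *\<^sub>v v \<in> kspan n ket (I \<times> J)"
  shows "(\<exists>Sb\<in>Ab. \<exists>St\<in>At. U *\<^sub>v ket \<Omega>b \<Omega>t = Sb *\<^sub>v (St *\<^sub>v ket \<Omega>b \<Omega>t))
       \<and> (\<exists>X :: 'i \<times> 'j \<Rightarrow> complex. \<exists>\<alpha> :: 'i \<Rightarrow> complex. \<exists>\<beta> :: 'j \<Rightarrow> complex.
            U *\<^sub>v ket \<Omega>b \<Omega>t = kcomb n ket (I \<times> J) X
            \<and> (\<forall>i\<in>I. \<forall>j\<in>J. X (i, j) = \<alpha> i * \<beta> j))"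
proof -
  define k0 where "k0 = ket \<Omega>b \<Omega>t"
  have k0: "k0 \<in> carrier_vec n"
    using ket_dim \<Omega>b_in \<Omega>t_in k0_def by auto
  obtain \<delta> where "\<delta> > 0" and \<delta>: "\<forall>v\<in>kspan n ket ({i\<in>I. eb i \<le> \<delta>} \<times> {j\<in>J. et j \<le> \<delta>}).
      U *\<^sub>v v \<in> kspan n ket (I \<times> J)"
    using A3 by blast
  have "k0 \<in> kspan n ket ({i\<in>I. eb i \<le> \<delta>} \<times> {j\<in>J. et j \<le> \<delta>})"
    unfolding k0_def using finI finJ ket_dim \<Omega>b_in \<Omega>t_in eb_\<Omega> et_\<Omega> \<open>\<delta> > 0\<close>
    by (intro ket_in_kspan) auto
  then obtain X where X: "U *\<^sub>v k0 = kcomb n ket (I \<times> J) X"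
    using \<delta> unfolding kspan_def by blast
  have "\<forall>Ob\<in>Ab. \<forall>Ot\<in>At. braket (U *\<^sub>v k0) ((Ob * Ot) *\<^sub>v (U *\<^sub>v k0))
      = braket k0 ((mat_adjoint U * Ob * U) *\<^sub>v k0) * braket k0 ((mat_adjoint U * Ot * U) *\<^sub>v k0)"
    using braket_unitary_conj_mult[OF U_carrier U_unitary(1) _ _ k0] Ab_carrier At_carrier
      A2 \<Omega>b_in \<Omega>t_in U_Ab U_At unfolding k0_def by (simp add: subset_iff)
  then obtain \<alpha> \<beta> where \<alpha>\<beta>: "\<forall>i\<in>I. \<forall>j\<in>J. X (i, j) = \<alpha> i * \<beta> j"
    using kcomb_coefficients_factorize[OF finI finJ ket_dim ket_orthonormal Ab_carrier At_carrier A1b A1t,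
        where f = "\<lambda>Ob. braket k0 ((mat_adjoint U * Ob * U) *\<^sub>v k0)"
          and g = "\<lambda>Ot. braket k0 ((mat_adjoint U * Ot * U) *\<^sub>v k0)"]
    unfolding X by blast
  have "kcomb n ket (I \<times> J) X = kcomb n ket (I \<times> J) (\<lambda>p. \<alpha> (fst p) * \<beta> (snd p))"
    unfolding kcomb_eq_comb_vec using \<alpha>\<beta> by (intro comb_vec_cong) auto
  then show ?thesis
    using exists_local_operators_product_state[OF Ab_carrier Ab_add Ab_smult Ab_one
        At_carrier At_add At_smult At_one finI finJ ket_dim \<Omega>b_in \<Omega>t_in A1b A1t, of \<alpha> \<beta>]
      X \<alpha>\<beta> k0_def by metis
qed

end
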